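(* Consider $N$ advertisers with click-through rates $c_i\in(0,1]$, abandonment probabilities $\gamma_i\ge0$, $\mu_i=c_i+\gamma_i\le 1$, and a fixed bid vector $(b_1,\dots,b_N)$, indexed in descending order of $\frac{b_ic_i}{\mu_i}$. Both the CE mechanism and the VCG mechanism rank the ads in this order. In the CE mechanism the ad at position $i$ pays per click $p_i^{CE}=\frac{b_{i+1}c_{i+1}\mu_i}{\mu_{i+1}c_i}$ (with $b_{N+1}=0$); in the VCG mechanism it pays per click $$p_i^{V}=\frac{\mu_i}{c_i}\sum_{j=i+1}^{N}b_jc_j\prod_{k=i+1}^{j-1}(1-\mu_k).$$ Then the search engine's expected revenue $\sum_{i=1}^N p_i\,c_i\prod_{l<i}(1-\mu_l)$ under the CE mechanism is greater than or equal to that under the VCG mechanism.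
   Context: Click model: users view ads top to bottom; having viewed the ad at position $i$ the user clicks it with probability $c_i$, abandons with probability $\gamma_i$, and otherwise moves on, so the ad at position $i$ is clicked with probability $c_i\prod_{l<i}(1-\mu_l)$. The VCG price above is the per-click version of the expected loss in value (measured by bids) that the ad at position $i$ imposes on the ads below it. *)

theory Defs
  imports Complex_Main
begin

text \<open>Advertisers are indexed 1..N (position i = advertiser i after sorting).
  mu i = c i + gamma i is passed as the function mu.\<close>

definition ce_price :: "nat \<Rightarrow> (nat \<Rightarrow> real) \<Rightarrow> (nat \<Rightarrow> real) \<Rightarrow> (nat \<Rightarrow> real) \<Rightarrow> nat \<Rightarrow> real" where
  "ce_price N b c mu i =
     (if i < N then b (i+1) * c (i+1) * mu i / (mu (i+1) * c i) else 0)"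

definition vcg_price :: "nat \<Rightarrow> (nat \<Rightarrow> real) \<Rightarrow> (nat \<Rightarrow> real) \<Rightarrow> (nat \<Rightarrow> real) \<Rightarrow> nat \<Rightarrow> real" where
  "vcg_price N b c mu i =
     mu i / c i * (\<Sum>j\<in>{i+1..N}. b j * c j * (\<Prod>k\<in>{i+1..<j}. (1 - mu k)))"

definition revenue :: "nat \<Rightarrow> (nat \<Rightarrow> real) \<Rightarrow> (nat \<Rightarrow> real) \<Rightarrow> (nat \<Rightarrow> real) \<Rightarrow> real" where
  "revenue N p c mu = (\<Sum>i\<in>{1..N}. p i * c i * (\<Prod>l\<in>{1..<i}. (1 - mu l)))"

end

theory Submission
  imports Defs
begin

text \<open>The VCG price of position i is mu i / c i times a survival-weighted average of the
  ratios b j c j / mu j of the ads below it; since the weights mu j \<Prod>(1 - mu k) sum to at most 1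
  (they telescope to 1 - \<Prod>(1 - mu k)) and the ratios are sorted, this average is at most
  b (i+1) c (i+1) / mu (i+1), which is exactly the CE price. So every per-click price drops,
  and with it the revenue.\<close>

lemma sum_survival_weighted_le:
  fixes x m :: "nat \<Rightarrow> real"
  assumes "\<And>j. j \<in> {a..n} \<Longrightarrow> 0 \<le> x j \<and> x j \<le> X \<and> 0 \<le> m j \<and> m j \<le> 1"
  shows "(\<Sum>j\<in>{a..n}. x j * m j * (\<Prod>k\<in>{a..<j}. 1 - m k))
         \<le> X * (1 - (\<Prod>k\<in>{a..n}. 1 - m k))"
  using assms
proof (induction n)
  case 0
  then show ?case
    by (cases "a = 0") (auto simp: mult_right_mono)
next
  case (Suc n)
  show ?case
  proof (cases "a \<le> Suc n")
    case False
    then show ?thesis by simp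
  next
    case True
    define P where "P = (\<Prod>k\<in>{a..n}. 1 - m k)"
    have IH: "(\<Sum>j\<in>{a..n}. x j * m j * (\<Prod>k\<in>{a..<j}. 1 - m k)) \<le> X * (1 - P)"
      using Suc by (auto simp: P_def)
    have last: "0 \<le> x (Suc n) \<and> x (Suc n) \<le> X \<and> 0 \<le> m (Suc n) \<and> m (Suc n) \<le> 1"
      using Suc.prems True by auto
    have "0 \<le> P"
      unfolding P_def using Suc.prems by (intro prod_nonneg) auto
    then have "x (Suc n) * m (Suc n) * P \<le> X * m (Suc n) * P"
      using last by (intro mult_right_mono) auto
    moreover have "{a..Suc n} = insert (Suc n) {a..n}" "{a..<Suc n} = {a..n}"
      using True by auto
    ultimately show ?thesis
      using IH by (simp add: P_def[symmetric] algebra_simps)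
  qed
qed

lemma vcg_price_le_ce_price:
  fixes b c mu :: "nat \<Rightarrow> real"
  assumes c_pos: "\<And>j. j \<in> {1..N} \<Longrightarrow> 0 < c j"
    and mu_pos: "\<And>j. j \<in> {1..N} \<Longrightarrow> 0 < mu j"
    and mu_le: "\<And>j. j \<in> {1..N} \<Longrightarrow> mu j \<le> 1"
    and b_nn: "\<And>j. j \<in> {1..N} \<Longrightarrow> 0 \<le> b j"
    and sorted: "\<And>i j. i \<in> {1..N} \<Longrightarrow> j \<in> {1..N} \<Longrightarrow> i \<le> j \<Longrightarrow>
                   b j * c j / mu j \<le> b i * c i / mu i"
    and i: "i \<in> {1..N}"
  shows "vcg_price N b c mu i \<le> ce_price N b c mu i"
proof (cases "i < N")
  case False
  then show ?thesis by (simp add: vcg_price_def ce_price_def)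
next
  case True
  define x where "x j = b j * c j / mu j" for j
  have i1: "i + 1 \<in> {1..N}" using True by auto
  have bounds: "0 \<le> x j \<and> x j \<le> x (i+1) \<and> 0 \<le> mu j \<and> mu j \<le> 1" if "j \<in> {i+1..N}" for j
  proof -
    have j: "j \<in> {1..N}" using that by auto
    show ?thesis
      using b_nn[OF j] c_pos[OF j] mu_pos[OF j] mu_le[OF j] sorted[OF i1 j] that
      by (auto simp: x_def)
  qed
  have "(\<Sum>j\<in>{i+1..N}. b j * c j * (\<Prod>k\<in>{i+1..<j}. 1 - mu k))
      = (\<Sum>j\<in>{i+1..N}. x j * mu j * (\<Prod>k\<in>{i+1..<j}. 1 - mu k))"
  proof (rule sum.cong)
    fix j assume "j \<in> {i+1..N}"
    then have "mu j \<noteq> 0" using mu_pos[of j] by auto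
    then show "b j * c j * (\<Prod>k\<in>{i+1..<j}. 1 - mu k) = x j * mu j * (\<Prod>k\<in>{i+1..<j}. 1 - mu k)"
      by (simp add: x_def)
  qed simp
  also have "\<dots> \<le> x (i+1) * (1 - (\<Prod>k\<in>{i+1..N}. 1 - mu k))"
    using bounds by (rule sum_survival_weighted_le)
  also have "\<dots> \<le> x (i+1)"
  proof -
    have "0 \<le> (\<Prod>k\<in>{i+1..N}. 1 - mu k)" using mu_le i by (intro prod_nonneg) auto
    then show ?thesis using bounds[of "i+1"] True by (simp add: right_diff_distrib)
  qed
  finally have "mu i / c i * (\<Sum>j\<in>{i+1..N}. b j * c j * (\<Prod>k\<in>{i+1..<j}. 1 - mu k))
                \<le> mu i / c i * x (i+1)"
    using mu_pos[OF i] c_pos[OF i] by (intro mult_left_mono) auto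
  then show ?thesis
    using True by (simp add: vcg_price_def ce_price_def x_def mult_ac)
qed

lemma revenue_mono:
  assumes "\<And>i. i \<in> {1..N} \<Longrightarrow> p i \<le> q i"
    and "\<And>i. i \<in> {1..N} \<Longrightarrow> 0 \<le> c i"
    and "\<And>i. i \<in> {1..N} \<Longrightarrow> mu i \<le> 1"
  shows "revenue N p c mu \<le> revenue N q c mu"
  unfolding revenue_def
proof (intro sum_mono mult_right_mono)
  fix i assume "i \<in> {1..N}"
  then show "p i \<le> q i" "0 \<le> c i" "0 \<le> (\<Prod>l\<in>{1..<i}. 1 - mu l)"
    using assms by (auto intro!: prod_nonneg)
qed

theorem theorem4:
  fixes N :: nat and b c gamma mu :: "nat \<Rightarrow> real"
  assumes c_pos: "\<And>i. i \<in> {1..N} \<Longrightarrow> 0 < c i \<and> c i \<le> 1"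
    and gamma_nn: "\<And>i. i \<in> {1..N} \<Longrightarrow> 0 \<le> gamma i"
    and mu_def: "\<And>i. i \<in> {1..N} \<Longrightarrow> mu i = c i + gamma i"
    and mu_le: "\<And>i. i \<in> {1..N} \<Longrightarrow> mu i \<le> 1"
    and b_nn: "\<And>i. i \<in> {1..N} \<Longrightarrow> 0 \<le> b i"
    and sorted: "\<And>i j. i \<in> {1..N} \<Longrightarrow> j \<in> {1..N} \<Longrightarrow> i \<le> j \<Longrightarrow>
                   b j * c j / mu j \<le> b i * c i / mu i"
  shows "revenue N (vcg_price N b c mu) c mu \<le> revenue N (ce_price N b c mu) c mu"
proof (rule revenue_mono)
  have mu_pos: "0 < mu i" if "i \<in> {1..N}" for i
    using c_pos[OF that] gamma_nn[OF that] mu_def[OF that] by linarith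
  fix i assume i: "i \<in> {1..N}"
  show "vcg_price N b c mu i \<le> ce_price N b c mu i"
    using c_pos by (intro vcg_price_le_ce_price[OF _ mu_pos mu_le b_nn sorted i]) auto
  show "0 \<le> c i" "mu i \<le> 1" using c_pos[OF i] mu_le[OF i] by auto
qed

end
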